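(* Let $n\ge2$, $m\ge1$, and let $C$ be an $n$-copula, with $C_m=\mathscr{B}^n_m(C)$. On a probability space $(\Omega,P)$ let $(X_1,\ldots,X_n)$ be a random vector with joint distribution function $C$ (so each $X_r$ is uniform on $I$), and let $X_r^j$ ($r=1,\ldots,n$, $j=1,\ldots,m$) be i.i.d. uniform random variables on $I$, independent of $(X_1,\ldots,X_n)$. For each $r$ let $X_r^{(1)}<\cdots<X_r^{(m)}$ be the order statistics of $X_r^1,\ldots,X_r^m$ (a.s. distinct). For a multi-index $k=(k_1,\ldots,k_n)\in\{1,\ldots,m\}^n$ let $E_k$ be the event $\{\tfrac{k_r-1}{m}<X_r<\tfrac{k_r}{m}\text{ for all }r=1,\ldots,n\}$; these events are disjoint and their union has probability $1$. Define, almost surely, $Y_r=\sum_{k\in\{1,\ldots,m\}^n}\mathbf 1_{E_k}\,X_r^{(k_r)}$ for $r=1,\ldots,n$ (i.e. on $E_k$, $Y_r=X_r^{(k_r)}$). Then for all $(x_1,\ldots,x_n)\in I^n$, $$C_m(x_1,\ldots,x_n)=P(Y_1<x_1,\ldots,Y_n<x_n).$$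
   Context: $I=[0,1]$. An $n$-copula is a function $C:I^n\to I$ that is the joint distribution function of a random vector whose marginals are uniform on $I$ (equivalently: grounded, with uniform margins $C(1,\ldots,x_k,\ldots,1)=x_k$, and $n$-increasing). $b_{i,m}(t)=\binom{m}{i}t^i(1-t)^{m-i}$ and $\mathscr{B}^n_m(C)(x_1,\ldots,x_n)=\sum_{i_1,\ldots,i_n=0}^m C(\tfrac{i_1}{m},\ldots,\tfrac{i_n}{m})\,b_{i_1,m}(x_1)\cdots b_{i_n,m}(x_n)$. *)

theory Defs
  imports "HOL-Probability.Probability"
begin

text \<open>Points of I^n are represented as extensional functions on the index set {..<n}
  (coordinate r corresponds to x_(r+1) of the paper).\<close>

definition cube :: "nat \<Rightarrow> (nat \<Rightarrow> real) set" where
  "cube n = PiE {..<n} (\<lambda>_. {0..1})"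

definition is_copula :: "nat \<Rightarrow> ((nat \<Rightarrow> real) \<Rightarrow> real) \<Rightarrow> bool" where
  "is_copula n C \<longleftrightarrow>
     (\<forall>x\<in>cube n. C x \<in> {0..1}) \<and>
     (\<forall>x\<in>cube n. (\<exists>r<n. x r = 0) \<longrightarrow> C x = 0) \<and>
     (\<forall>r<n. \<forall>t\<in>{0..1}. C (\<lambda>s\<in>{..<n}. if s = r then t else 1) = t) \<and>
     (\<forall>a\<in>cube n. \<forall>b\<in>cube n. (\<forall>r<n. a r \<le> b r) \<longrightarrow>
        0 \<le> (\<Sum>\<epsilon>\<in>PiE {..<n} (\<lambda>_. UNIV :: bool set).
               (-1::real) ^ card {r\<in>{..<n}. \<not> \<epsilon> r} *
               C (\<lambda>r\<in>{..<n}. if \<epsilon> r then b r else a r)))"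

definition bern :: "nat \<Rightarrow> nat \<Rightarrow> real \<Rightarrow> real" where
  "bern i m t = real (m choose i) * t ^ i * (1 - t) ^ (m - i)"

definition bernstein_copula ::
  "nat \<Rightarrow> nat \<Rightarrow> ((nat \<Rightarrow> real) \<Rightarrow> real) \<Rightarrow> (nat \<Rightarrow> real) \<Rightarrow> real" where
  "bernstein_copula n m C x =
     (\<Sum>i\<in>PiE {..<n} (\<lambda>_. {0..m}).
        C (\<lambda>r\<in>{..<n}. real (i r) / real m) * (\<Prod>r<n. bern (i r) m (x r)))"

definition order_stat :: "nat \<Rightarrow> (nat \<Rightarrow> real) \<Rightarrow> nat \<Rightarrow> real" where
  "order_stat m xs k = sort (map xs [1..<m+1]) ! (k - 1)"

end

theory Submission
  imports Defs
begin

text \<open>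
  The proof computes both sides of the identity as the same sum over cells k:
  \<^item> Y r < x r on cell k iff at least k r samples of row r lie below x r; by independence
    of X and the samples, P(Y < x) = sum over k of P(cell k) * P(all row counts reach k);
  \<^item> each row count is Binomial(m, x r), so the second factor is a product of binomial
    tails sum_{i >= k r} bern i m (x r);
  \<^item> conversely the Bernstein polynomial of C is an Abel-type rearrangement: writing
    C at grid point i/m as the total probability of the cells below i (X is a.s. in an
    open cell since its margins are uniform) turns the Bernstein sum into the same
    expression.
\<close>

lemma sorted_nth_less_iff:
  fixes L :: "'b::linorder list"
  assumes "sorted L" "i < length L"
  shows "L ! i < t \<longleftrightarrow> i < length (filter (\<lambda>y. y < t) L)"
  using assms
proof (induction L arbitrary: i)
  case (Cons a L)
  show ?case
  proof (cases "a < t")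
    case True
    then show ?thesis using Cons by (cases i) auto
  next
    case False
    then have "filter (\<lambda>y. y < t) (a # L) = []"
      using Cons.prems(1) by (auto simp: filter_empty_conv not_less intro: order_trans)
    moreover have "a \<le> (a # L) ! i" using Cons.prems nth_mem[OF Cons.prems(2)] by auto
    ultimately show ?thesis using False by auto
  qed
qed simp

lemma order_stat_less_iff:
  assumes "1 \<le> k" "k \<le> m"
  shows "order_stat m xs k < t \<longleftrightarrow> k \<le> card {j\<in>{1..m}. xs j < t}"
proof -
  let ?L = "sort (map xs [1..<m+1])"
  have "order_stat m xs k < t \<longleftrightarrow> k - 1 < length (filter (\<lambda>y. y < t) ?L)"
    unfolding order_stat_def using assms by (intro sorted_nth_less_iff) auto
  also have "length (filter (\<lambda>y. y < t) ?L) = length (filter (\<lambda>j. xs j < t) [1..<m+1])"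
    by (simp add: filter_sort filter_map o_def)
  also have "\<dots> = card {j\<in>{1..m}. xs j < t}"
    by (subst distinct_card[symmetric]) (auto intro: arg_cong[where f = card])
  finally show ?thesis using assms by auto
qed

lemma prod_pattern:
  assumes "T \<subseteq> {1..m}"
  shows "(\<Prod>j\<in>{1..m}. if j \<in> T then (t::real) else 1 - t) = t ^ card T * (1 - t) ^ (m - card T)"
proof -
  have "(\<Prod>j\<in>{1..m}. if j \<in> T then t else 1 - t) = (\<Prod>j\<in>T. t) * (\<Prod>j\<in>{1..m} - T. 1 - t)"
    using assms by (simp add: prod.If_cases Int_absorb1 Diff_eq)
  then show ?thesis using assms by (simp add: card_Diff_subset finite_subset)
qed

lemma binomial_tail_as_subset_sum:
  assumes "k \<le> m"
  shows "(\<Sum>T\<in>{T. T \<subseteq> {1..m} \<and> k \<le> card T}. (t::real) ^ card T * (1 - t) ^ (m - card T))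
         = (\<Sum>i=k..m. bern i m t)"
proof -
  have layers:
    "{T. T \<subseteq> {1..m} \<and> k \<le> card T} = (\<Union>i\<in>{k..m}. {T. T \<subseteq> {1..m} \<and> card T = i})"
    using card_mono[of "{1..m}"] by force
  have "(\<Sum>T\<in>{T. T \<subseteq> {1..m} \<and> k \<le> card T}. t ^ card T * (1 - t) ^ (m - card T))
     = (\<Sum>i=k..m. \<Sum>T\<in>{T. T \<subseteq> {1..m} \<and> card T = i}. t ^ i * (1 - t) ^ (m - i))"
    unfolding layers by (subst sum.UNION_disjoint) (auto simp: finite_subset intro!: sum.cong)
  also have "\<dots> = (\<Sum>i=k..m. bern i m t)"
    by (simp add: bern_def n_subsets mult.assoc)
  finally show ?thesis .
qed

lemma grid_point_in_cube:
  assumes "i \<in> PiE {..<n} (\<lambda>_. {0..m})"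
  shows "(\<lambda>r\<in>{..<n}. real (i r) / real m) \<in> cube n"
  using assms by (auto simp: cube_def PiE_iff divide_le_eq_1)

lemma bernstein_copula_cell_expansion:
  fixes n m :: nat and C :: "(nat \<Rightarrow> real) \<Rightarrow> real" and p :: "(nat \<Rightarrow> nat) \<Rightarrow> real"
  defines "K \<equiv> PiE {..<n} (\<lambda>_. {1..m})"
  assumes grounded: "\<And>i. i \<in> PiE {..<n} (\<lambda>_. {0..m}) \<Longrightarrow> \<exists>r<n. i r = 0 \<Longrightarrow>
                       C (\<lambda>r\<in>{..<n}. real (i r) / real m) = 0"
    and grid: "\<And>i. i \<in> K \<Longrightarrow>
                 C (\<lambda>r\<in>{..<n}. real (i r) / real m) = (\<Sum>k\<in>{k\<in>K. \<forall>r<n. k r \<le> i r}. p k)"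
  shows "bernstein_copula n m C x = (\<Sum>k\<in>K. p k * (\<Prod>r<n. \<Sum>i=k r..m. bern i m (x r)))"
proof -
  define b where "b = (\<lambda>i. \<Prod>r<n. bern (i r) m (x r))"
  have finK: "finite K" unfolding K_def by (simp add: finite_PiE)
  have "bernstein_copula n m C x = (\<Sum>i\<in>K. C (\<lambda>r\<in>{..<n}. real (i r) / real m) * b i)"
    unfolding bernstein_copula_def b_def
  proof (rule sum.mono_neutral_right)
    show "K \<subseteq> PiE {..<n} (\<lambda>_. {0..m})" unfolding K_def by (rule PiE_mono) auto
    show "\<forall>i\<in>PiE {..<n} (\<lambda>_. {0..m}) - K.
            C (\<lambda>r\<in>{..<n}. real (i r) / real m) * (\<Prod>r<n. bern (i r) m (x r)) = 0"
    proof
      fix i assume i: "i \<in> PiE {..<n} (\<lambda>_. {0..m}) - K"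
      then have "\<exists>r<n. i r = 0" by (fastforce simp: K_def PiE_iff)
      with i show "C (\<lambda>r\<in>{..<n}. real (i r) / real m) * (\<Prod>r<n. bern (i r) m (x r)) = 0"
        using grounded by simp
    qed
  qed (simp add: finite_PiE)
  also have "\<dots> = (\<Sum>i\<in>K. \<Sum>k\<in>{k\<in>K. \<forall>r<n. k r \<le> i r}. p k * b i)"
    by (simp add: grid sum_distrib_right)
  also have "\<dots> = (\<Sum>k\<in>K. \<Sum>i\<in>{i\<in>K. \<forall>r<n. k r \<le> i r}. p k * b i)"
    by (rule sum.swap_restrict[OF finK finK, symmetric])
  also have "\<dots> = (\<Sum>k\<in>K. p k * (\<Prod>r<n. \<Sum>i=k r..m. bern i m (x r)))"
  proof (rule sum.cong)
    fix k assume k: "k \<in> K"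
    have "{i\<in>K. \<forall>r<n. k r \<le> i r} = PiE {..<n} (\<lambda>r. {k r..m})"
      using k unfolding K_def PiE_def Pi_def by (auto intro: order_trans)
    then show "(\<Sum>i\<in>{i\<in>K. \<forall>r<n. k r \<le> i r}. p k * b i)
        = p k * (\<Prod>r<n. \<Sum>i=k r..m. bern i m (x r))"
      by (simp add: b_def prod_sum_PiE sum_distrib_left)
  qed simp
  finally show ?thesis .
qed

lemma grid_cell_exists:
  fixes t :: real
  assumes "m \<ge> 1" "0 \<le> t" "t \<le> 1" "\<forall>j\<le>m. t \<noteq> real j / real m"
  shows "\<exists>k\<in>{1..m}. (real k - 1) / real m < t \<and> t < real k / real m"
proof -
  have mpos: "real m > 0" using assms(1) by simp
  define l where "l = \<lfloor>t * real m\<rfloor>"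
  have l0: "0 \<le> l" using assms(2) mpos by (simp add: l_def)
  have tm: "t * real m \<le> real m" using assms(3) mpos by simp
  have "real_of_int l \<noteq> t * real m"
  proof
    assume "real_of_int l = t * real m"
    moreover have "nat l \<le> m" using calculation tm l0 by linarith
    ultimately have "t = real (nat l) / real m" "nat l \<le> m"
      using l0 mpos by (auto simp: field_simps)
    then show False using assms(4) by blast
  qed
  then have below: "real_of_int l < t * real m" by (simp add: l_def less_le)
  have above: "t * real m < real_of_int l + 1" by (simp add: l_def)
  have "l < int m" using below tm by linarith
  then show ?thesis using l0 below above mpos
    by (intro bexI[of _ "nat l + 1"]) (auto simp: field_simps)
qed

lemma grid_cell_unique:
  fixes t :: real
  assumes "m \<ge> 1"
    and "(real k - 1) / real m < t" "t < real k / real m"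
    and "(real k' - 1) / real m < t" "t < real k' / real m"
  shows "k = k'"
proof -
  have "real m > 0" using assms(1) by simp
  moreover have "(real k - 1) / real m < real k' / real m"
    and "(real k' - 1) / real m < real k / real m"
    using assms(2-5) by linarith+
  ultimately have "real k - 1 < real k'" "real k' - 1 < real k"
    by (simp_all add: divide_less_cancel)
  then show ?thesis by linarith
qed

lemma cell_below_iff:
  fixes t :: real
  assumes "m \<ge> 1" "(real k - 1) / real m < t" "t < real k / real m"
  shows "t \<le> real i / real m \<longleftrightarrow> k \<le> i"
proof
  have mpos: "real m > 0" using assms(1) by simp
  assume "t \<le> real i / real m"
  then have "(real k - 1) / real m < real i / real m" using assms(2) by linarith
  then show "k \<le> i" using mpos by (simp add: divide_less_cancel)
next
  assume "k \<le> i"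
  then have "real k / real m \<le> real i / real m" by (simp add: divide_right_mono)
  then show "t \<le> real i / real m" using assms(3) by linarith
qed

lemma (in prob_space) uniform_cdf_no_atom:
  assumes f: "f \<in> borel_measurable M"
    and cdf: "\<And>t. t \<in> {0..1} \<Longrightarrow> prob {\<omega>\<in>space M. f \<omega> \<le> t} = t"
    and c: "c \<in> {0..1}"
  shows "prob {\<omega>\<in>space M. f \<omega> = c} = 0"
proof -
  have [measurable]: "f \<in> borel_measurable M" by fact
  have small: "prob {\<omega>\<in>space M. f \<omega> = c} \<le> d" if d: "0 < d" "d \<le> c" for d
  proof -
    have "prob {\<omega>\<in>space M. f \<omega> = c}
          \<le> prob ({\<omega>\<in>space M. f \<omega> \<le> c} - {\<omega>\<in>space M. f \<omega> \<le> c - d})"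
      using d by (intro finite_measure_mono) auto
    also have "\<dots> = c - (c - d)"
      using d c by (subst finite_measure_Diff) (auto simp: cdf)
    finally show ?thesis by simp
  qed
  show ?thesis
  proof (cases "c = 0")
    case True
    have "prob {\<omega>\<in>space M. f \<omega> = c} \<le> prob {\<omega>\<in>space M. f \<omega> \<le> 0}"
      using True by (intro finite_measure_mono) auto
    then show ?thesis using cdf[of 0] by (simp add: measure_le_0_iff)
  next
    case False
    then have "c > 0" using c by simp
    show ?thesis
    proof (rule ccontr)
      assume "prob {\<omega>\<in>space M. f \<omega> = c} \<noteq> 0"
      then have pos: "prob {\<omega>\<in>space M. f \<omega> = c} > 0" using measure_nonneg less_le by metis
      then show False
        using small[of "min c (prob {\<omega>\<in>space M. f \<omega> = c} / 2)"] \<open>c > 0\<close> by linarith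
    qed
  qed
qed

lemma (in prob_space) uniform_cdf_AE_in_cell:
  assumes f: "f \<in> borel_measurable M"
    and cdf: "\<And>t. t \<in> {0..1} \<Longrightarrow> prob {\<omega>\<in>space M. f \<omega> \<le> t} = t"
    and m: "m \<ge> 1"
  shows "AE \<omega> in M. \<exists>k\<in>{1..m}. (real k - 1) / real m < f \<omega> \<and> f \<omega> < real k / real m"
proof -
  have [measurable]: "f \<in> borel_measurable M" by fact
  have "prob {\<omega>\<in>space M. f \<omega> < 0} \<le> prob {\<omega>\<in>space M. f \<omega> \<le> 0}"
    by (intro finite_measure_mono) auto
  then have "prob {\<omega>\<in>space M. f \<omega> < 0} = 0" using cdf[of 0] by (simp add: measure_le_0_iff)
  then have nonneg: "AE \<omega> in M. \<not> f \<omega> < 0" by (subst prob_Collect_eq_0[symmetric]) auto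
  have le1: "AE \<omega> in M. f \<omega> \<le> 1" using cdf[of 1] by (subst prob_Collect_eq_1[symmetric]) auto
  have "AE \<omega> in M. \<forall>j\<in>{..m}. f \<omega> \<noteq> real j / real m"
  proof (rule AE_finite_allI)
    fix j assume "j \<in> {..m}"
    then have "real j / real m \<in> {0..1}" by (auto simp: divide_le_eq_1)
    then have "prob {\<omega>\<in>space M. f \<omega> = real j / real m} = 0"
      using uniform_cdf_no_atom[OF f cdf] by blast
    then show "AE \<omega> in M. f \<omega> \<noteq> real j / real m" by (subst prob_Collect_eq_0[symmetric]) auto
  qed simp
  with nonneg le1 show ?thesis
    by eventually_elim (use m in \<open>intro grid_cell_exists, auto\<close>)
qed

definition cell_event ::
  "'a measure \<Rightarrow> nat \<Rightarrow> nat \<Rightarrow> (nat \<Rightarrow> 'a \<Rightarrow> real) \<Rightarrow> (nat \<Rightarrow> nat) \<Rightarrow> 'a set" where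
  "cell_event M n m X k = {\<omega>\<in>space M. \<forall>r<n.
     (real (k r) - 1) / real m < X r \<omega> \<and> X r \<omega> < real (k r) / real m}"

locale copula_vector = prob_space M for M :: "'a measure" +
  fixes n :: nat and C :: "(nat \<Rightarrow> real) \<Rightarrow> real" and X :: "nat \<Rightarrow> 'a \<Rightarrow> real"
  assumes copula: "is_copula n C"
    and X_measurable: "\<And>r. r < n \<Longrightarrow> X r \<in> borel_measurable M"
    and joint_cdf: "\<And>x. x \<in> cube n \<Longrightarrow> C x = prob {\<omega>\<in>space M. \<forall>r<n. X r \<omega> \<le> x r}"
begin

abbreviation cell :: "nat \<Rightarrow> (nat \<Rightarrow> nat) \<Rightarrow> 'a set" where
  "cell m k \<equiv> cell_event M n m X k"

lemma cell_measurable: "cell m k \<in> sets M"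
proof -
  have "cell m k = {\<omega>\<in>space M. \<forall>r\<in>{..<n}.
          (real (k r) - 1) / real m < X r \<omega> \<and> X r \<omega> < real (k r) / real m}"
    by (auto simp: cell_event_def)
  also have "\<dots> \<in> sets M"
    using X_measurable by (intro sets.sets_Collect_finite_All) auto
  finally show ?thesis .
qed

lemma cell_index_unique:
  assumes "m \<ge> 1" "k \<in> PiE {..<n} (\<lambda>_. {1..m})" "k' \<in> PiE {..<n} (\<lambda>_. {1..m})"
    and "\<omega> \<in> cell m k" "\<omega> \<in> cell m k'"
  shows "k = k'"
proof (rule PiE_ext[OF assms(2,3)])
  fix r assume "r \<in> {..<n}"
  then show "k r = k' r"
    using assms(1,4,5) by (auto simp: cell_event_def intro: grid_cell_unique)
qed

lemma cell_membership_iff: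
  assumes "m \<ge> 1" "k \<in> PiE {..<n} (\<lambda>_. {1..m})" "\<omega> \<in> cell m k"
    and "k' \<in> PiE {..<n} (\<lambda>_. {1..m})"
  shows "\<omega> \<in> cell m k' \<longleftrightarrow> k' = k"
  using cell_index_unique[OF assms(1,4,2) _ assms(3)] assms(3) by blast

lemma cells_disjoint:
  assumes "m \<ge> 1"
  shows "disjoint_family_on (cell m) (PiE {..<n} (\<lambda>_. {1..m}))"
  using cell_index_unique[OF assms] by (auto simp: disjoint_family_on_def)

text \<open>The uniform margins of the copula say that each X r is uniformly distributed on [0,1];
  the other coordinates are almost surely at most 1.\<close>
lemma marginal_cdf:
  assumes r: "r < n" and t: "t \<in> {0..1}"
  shows "prob {\<omega>\<in>space M. X r \<omega> \<le> t} = t"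
proof -
  define D where "D = (\<lambda>t. {\<omega>\<in>space M. \<forall>s<n. X s \<omega> \<le> (if s = r then t else 1)})"
  have D_meas: "D t \<in> sets M" for t
  proof -
    have "D t = {\<omega>\<in>space M. \<forall>s\<in>{..<n}. X s \<omega> \<le> (if s = r then t else 1)}"
      by (auto simp: D_def)
    also have "\<dots> \<in> sets M" using X_measurable by (intro sets.sets_Collect_finite_All) auto
    finally show ?thesis .
  qed
  have D_prob: "prob (D t) = t" if "t \<in> {0..1}" for t
  proof -
    have "(\<lambda>s\<in>{..<n}. if s = r then t else 1) \<in> cube n" using that by (auto simp: cube_def)
    then have "C (\<lambda>s\<in>{..<n}. if s = r then t else 1) = prob (D t)"
      by (subst joint_cdf) (auto simp: D_def intro!: arg_cong[where f = prob])
    moreover have "C (\<lambda>s\<in>{..<n}. if s = r then t else 1) = t"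
      using copula r that by (simp add: is_copula_def)
    ultimately show ?thesis by simp
  qed
  have "prob (D 1) = 1" using D_prob[of 1] by simp
  then have "AE \<omega> in M. \<omega> \<in> D 1" using D_meas prob_eq_1 by blast
  then have "AE \<omega> in M. \<omega> \<in> {\<omega>\<in>space M. X r \<omega> \<le> t} \<longleftrightarrow> \<omega> \<in> D t"
    by eventually_elim (use r in \<open>auto simp: D_def\<close>)
  then have "prob {\<omega>\<in>space M. X r \<omega> \<le> t} = prob (D t)"
    using X_measurable[OF r] D_meas by (intro measure_eq_AE) auto
  then show ?thesis using D_prob[OF t] by simp
qed

lemma AE_in_some_cell:
  assumes m: "m \<ge> 1"
  shows "AE \<omega> in M. \<exists>k\<in>PiE {..<n} (\<lambda>_. {1..m}). \<omega> \<in> cell m k"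
proof -
  have "AE \<omega> in M. \<forall>r\<in>{..<n}. \<exists>k\<in>{1..m}.
          (real k - 1) / real m < X r \<omega> \<and> X r \<omega> < real k / real m"
    using X_measurable marginal_cdf m by (intro AE_finite_allI uniform_cdf_AE_in_cell) auto
  with AE_space show ?thesis
    by eventually_elim (auto simp: cell_event_def PiE_choice)
qed

lemma outside_cells_null:
  assumes "m \<ge> 1"
  shows "space M - (\<Union>k\<in>PiE {..<n} (\<lambda>_. {1..m}). cell m k) \<in> null_sets M"
proof -
  have "finite (PiE {..<n} (\<lambda>_. {1..m::nat}))" by (simp add: finite_PiE)
  then have "space M - (\<Union>k\<in>PiE {..<n} (\<lambda>_. {1..m}). cell m k) \<in> sets M"
    using cell_measurable by blast
  then show ?thesis
    using AE_in_some_cell[OF assms] by (subst AE_iff_null_sets) (auto elim: AE_mp)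
qed

lemma copula_at_grid_point:
  assumes m: "m \<ge> 1" and i: "i \<in> PiE {..<n} (\<lambda>_. {0..m})"
  shows "C (\<lambda>r\<in>{..<n}. real (i r) / real m)
       = (\<Sum>k\<in>{k\<in>PiE {..<n} (\<lambda>_. {1..m}). \<forall>r<n. k r \<le> i r}. prob (cell m k))"
proof -
  define K where "K = PiE {..<n} (\<lambda>_. {1..m})"
  define Ki where "Ki = {k\<in>K. \<forall>r<n. k r \<le> i r}"
  define S where "S = {\<omega>\<in>space M. \<forall>r<n. X r \<omega> \<le> real (i r) / real m}"
  have finKi: "finite Ki" by (simp add: Ki_def K_def finite_PiE)
  have S_meas: "S \<in> sets M"
  proof -
    have "S = {\<omega>\<in>space M. \<forall>r\<in>{..<n}. X r \<omega> \<le> real (i r) / real m}" by (auto simp: S_def)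
    also have "\<dots> \<in> sets M" using X_measurable by (intro sets.sets_Collect_finite_All) auto
    finally show ?thesis .
  qed
  have "C (\<lambda>r\<in>{..<n}. real (i r) / real m) = prob S"
    using grid_point_in_cube[OF i]
    by (subst joint_cdf) (auto simp: S_def intro!: arg_cong[where f = prob])
  also have "\<dots> = prob (\<Union>k\<in>Ki. cell m k)"
  proof (rule measure_eq_AE)
    show "AE \<omega> in M. \<omega> \<in> S \<longleftrightarrow> \<omega> \<in> (\<Union>k\<in>Ki. cell m k)"
      using AE_in_some_cell[OF m]
    proof eventually_elim
      fix \<omega> assume "\<exists>k\<in>PiE {..<n} (\<lambda>_. {1..m}). \<omega> \<in> cell m k"
      then obtain k where k: "k \<in> K" "\<omega> \<in> cell m k" by (auto simp: K_def)
      have "X r \<omega> \<le> real (i r) / real m \<longleftrightarrow> k r \<le> i r" if "r < n" for r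
        using k(2) that by (intro cell_below_iff[OF m]) (auto simp: cell_event_def)
      then have "\<omega> \<in> S \<longleftrightarrow> (\<forall>r<n. k r \<le> i r)"
        using k(2) by (auto simp: S_def cell_event_def)
      also have "\<dots> \<longleftrightarrow> \<omega> \<in> (\<Union>k\<in>Ki. cell m k)"
        using k by (auto simp: Ki_def K_def cell_membership_iff[OF m k(1)[unfolded K_def] k(2)])
      finally show "\<omega> \<in> S \<longleftrightarrow> \<omega> \<in> (\<Union>k\<in>Ki. cell m k)" .
    qed
  qed (use S_meas finKi cell_measurable in auto)
  also have "\<dots> = (\<Sum>k\<in>Ki. prob (cell m k))"
    using finKi cell_measurable cells_disjoint[OF m]
    by (intro measure_finite_Union) (auto simp: Ki_def K_def intro: disjoint_family_on_mono)
  finally show ?thesis by (simp add: Ki_def K_def)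
qed

end

lemma (in prob_space) uniform_prob_halflines:
  assumes d: "distr M lborel f = uniform_measure lborel {0..1::real}"
    and f: "f \<in> borel_measurable M" and t: "t \<in> {0..1}"
  shows "prob (f -` {..<t} \<inter> space M) = t" and "prob (f -` {t..} \<inter> space M) = 1 - t"
proof -
  have preimage: "prob (f -` S \<inter> space M) = measure lborel ({0..1} \<inter> S)"
    if "S \<in> sets borel" for S
  proof -
    have "prob (f -` S \<inter> space M) = measure (distr M lborel f) S"
      using f that by (intro measure_distr[symmetric]) auto
    also have "\<dots> = measure lborel ({0..1} \<inter> S)"
      unfolding d using that by simp
    finally show ?thesis .
  qed
  have "{0..1} \<inter> {..<t} = {0..<t}" "{0..1} \<inter> {t..} = {t..1}" using t by auto
  then show "prob (f -` {..<t} \<inter> space M) = t" "prob (f -` {t..} \<inter> space M) = 1 - t"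
    using preimage[of "{..<t}"] preimage[of "{t..}"] t by simp_all
qed

lemma measurable_count_below:
  assumes "finite S" and f: "\<And>j. j \<in> S \<Longrightarrow> f j \<in> borel_measurable N"
  shows "(\<lambda>\<omega>. real (card {j\<in>S. f j \<omega> < (t::real)})) \<in> borel_measurable N"
proof -
  have "real (card {j\<in>S. f j \<omega> < t}) = (\<Sum>j\<in>S. indicator {..<t} (f j \<omega>))" for \<omega>
    using assms(1) by (simp add: indicator_def sum.inter_filter[symmetric] Int_def)
  moreover have "(\<lambda>\<omega>. \<Sum>j\<in>S. indicator {..<t} (f j \<omega>) :: real) \<in> borel_measurable N"
    using f by (intro borel_measurable_sum) measurable
  ultimately show ?thesis by simp
qed

locale uniform_sample = prob_space M for M :: "'a measure" +
  fixes n m :: nat and XX :: "nat \<Rightarrow> nat \<Rightarrow> 'a \<Rightarrow> real"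
  assumes sample_measurable: "\<And>r j. (r, j) \<in> {..<n} \<times> {1..m} \<Longrightarrow> XX r j \<in> borel_measurable M"
    and sample_uniform: "\<And>r j. (r, j) \<in> {..<n} \<times> {1..m} \<Longrightarrow>
                           distr M lborel (XX r j) = uniform_measure lborel {0..1}"
    and sample_indep: "indep_vars (\<lambda>_. borel) (\<lambda>p. XX (fst p) (snd p)) ({..<n} \<times> {1..m})"
begin

lemma below_pattern_prob:
  assumes "n \<ge> 1" "m \<ge> 1" and x: "\<And>r. r < n \<Longrightarrow> x r \<in> {0..1}"
    and S: "\<And>r. r < n \<Longrightarrow> S r \<subseteq> {1..m}"
  shows "prob {\<omega>\<in>space M. \<forall>r<n. {j\<in>{1..m}. XX r j \<omega> < x r} = S r}
       = (\<Prod>r<n. x r ^ card (S r) * (1 - x r) ^ (m - card (S r)))"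
proof -
  define J where "J = {..<n} \<times> {1..m}"
  define B where "B = (\<lambda>p. if snd p \<in> S (fst p) then {..<x (fst p)} else {x (fst p)..})"
  define V where "V = (\<lambda>p. XX (fst p) (snd p))"
  have "(0, 1) \<in> J" using assms(1,2) by (simp add: J_def)
  then have J: "J \<noteq> {}" "finite J" by (auto simp: J_def)
  have pattern_iff:
    "(\<forall>r<n. {j\<in>{1..m}. XX r j \<omega> < x r} = S r) \<longleftrightarrow> (\<forall>p\<in>J. V p \<omega> \<in> B p)" for \<omega>
  proof -
    have "(\<forall>r<n. {j\<in>{1..m}. XX r j \<omega> < x r} = S r)
          \<longleftrightarrow> (\<forall>r<n. \<forall>j\<in>{1..m}. XX r j \<omega> < x r \<longleftrightarrow> j \<in> S r)"
      using S by blast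
    also have "\<dots> \<longleftrightarrow> (\<forall>p\<in>J. V p \<omega> \<in> B p)"
      by (auto simp: J_def V_def B_def not_less[symmetric])
    finally show ?thesis .
  qed
  have "{\<omega>\<in>space M. \<forall>r<n. {j\<in>{1..m}. XX r j \<omega> < x r} = S r}
      = (\<Inter>p\<in>J. V p -` B p \<inter> space M)"
    unfolding pattern_iff using J(1) by blast
  also have "prob \<dots> = (\<Prod>p\<in>J. prob (V p -` B p \<inter> space M))"
  proof (rule indep_setsD[OF _ order_refl J])
    show "indep_sets (\<lambda>p. {V p -` A \<inter> space M | A. A \<in> sets borel}) J"
      using sample_indep by (simp add: indep_vars_def2 J_def V_def)
    have "B p \<in> sets borel" for p by (simp add: B_def)
    then show "\<forall>p\<in>J. V p -` B p \<inter> space M \<in> {V p -` A \<inter> space M | A. A \<in> sets borel}"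
      by blast
  qed
  also have "\<dots> = (\<Prod>p\<in>J. if snd p \<in> S (fst p) then x (fst p) else 1 - x (fst p))"
  proof (rule prod.cong)
    fix p assume p: "p \<in> J"
    then have "distr M lborel (V p) = uniform_measure lborel {0..1}" "V p \<in> borel_measurable M"
      "x (fst p) \<in> {0..1}"
      using sample_uniform sample_measurable x by (auto simp: J_def V_def)
    then show "prob (V p -` B p \<inter> space M)
        = (if snd p \<in> S (fst p) then x (fst p) else 1 - x (fst p))"
      using uniform_prob_halflines by (simp add: B_def)
  qed simp
  also have "\<dots> = (\<Prod>r<n. \<Prod>j\<in>{1..m}. if j \<in> S r then x r else 1 - x r)"
    by (simp add: J_def prod.cartesian_product case_prod_unfold)
  also have "\<dots> = (\<Prod>r<n. x r ^ card (S r) * (1 - x r) ^ (m - card (S r)))"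
    using S by (intro prod.cong refl prod_pattern) auto
  finally show ?thesis .
qed

lemma below_pattern_measurable:
  assumes S: "\<And>r. r < n \<Longrightarrow> S r \<subseteq> {1..m}"
  shows "{\<omega>\<in>space M. \<forall>r<n. {j\<in>{1..m}. XX r j \<omega> < x r} = S r} \<in> sets M"
proof -
  have "{\<omega>\<in>space M. \<forall>r<n. {j\<in>{1..m}. XX r j \<omega> < x r} = S r}
      = {\<omega>\<in>space M. \<forall>r\<in>{..<n}. \<forall>j\<in>{1..m}. XX r j \<omega> < x r \<longleftrightarrow> j \<in> S r}"
    using S by blast
  also have "\<dots> \<in> sets M"
  proof (intro sets.sets_Collect_finite_All ballI)
    fix r j assume "r \<in> {..<n}" "j \<in> {1..m}"
    then have [measurable]: "XX r j \<in> borel_measurable M" using sample_measurable by simp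
    show "{\<omega> \<in> space M. XX r j \<omega> < x r \<longleftrightarrow> j \<in> S r} \<in> sets M" by measurable
  qed auto
  finally show ?thesis .
qed

lemma counts_at_least_prob:
  assumes "n \<ge> 1" "m \<ge> 1" and x: "\<And>r. r < n \<Longrightarrow> x r \<in> {0..1}"
    and k: "\<And>r. r < n \<Longrightarrow> k r \<le> m"
  shows "prob {\<omega>\<in>space M. \<forall>r<n. k r \<le> card {j\<in>{1..m}. XX r j \<omega> < x r}}
       = (\<Prod>r<n. \<Sum>i=k r..m. bern i m (x r))"
proof -
  define T where "T = (\<lambda>r. {U. U \<subseteq> {1..m} \<and> k r \<le> card U})"
  define A where "A = (\<lambda>S. {\<omega>\<in>space M. \<forall>r<n. {j\<in>{1..m}. XX r j \<omega> < x r} = S r})"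
  have finT: "finite (T r)" for r unfolding T_def by (rule finite_subset[of _ "Pow {1..m}"]) auto
  have T_sub: "S r \<subseteq> {1..m}" if "S \<in> PiE {..<n} T" "r < n" for S r
    using that by (auto simp: T_def PiE_iff)
  have event: "{\<omega>\<in>space M. \<forall>r<n. k r \<le> card {j\<in>{1..m}. XX r j \<omega> < x r}}
      = (\<Union>S\<in>PiE {..<n} T. A S)"
  proof (intro set_eqI iffI)
    fix \<omega> assume "\<omega> \<in> {\<omega>\<in>space M. \<forall>r<n. k r \<le> card {j\<in>{1..m}. XX r j \<omega> < x r}}"
    then have "(\<lambda>r\<in>{..<n}. {j\<in>{1..m}. XX r j \<omega> < x r}) \<in> PiE {..<n} T"
      "\<omega> \<in> A (\<lambda>r\<in>{..<n}. {j\<in>{1..m}. XX r j \<omega> < x r})"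
      by (auto simp: T_def A_def)
    then show "\<omega> \<in> (\<Union>S\<in>PiE {..<n} T. A S)" by blast
  next
    fix \<omega> assume "\<omega> \<in> (\<Union>S\<in>PiE {..<n} T. A S)"
    then obtain S where S: "S \<in> PiE {..<n} T" "\<omega> \<in> A S" by blast
    have "k r \<le> card {j\<in>{1..m}. XX r j \<omega> < x r}" if "r < n" for r
    proof -
      have "{j\<in>{1..m}. XX r j \<omega> < x r} = S r" using S(2) that by (simp add: A_def)
      moreover have "S r \<in> T r" using S(1) that by (simp add: PiE_iff)
      ultimately show ?thesis by (simp add: T_def)
    qed
    then show "\<omega> \<in> {\<omega>\<in>space M. \<forall>r<n. k r \<le> card {j\<in>{1..m}. XX r j \<omega> < x r}}"
      using S(2) by (simp add: A_def)
  qed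
  have A_disjoint: "disjoint_family_on A (PiE {..<n} T)"
    unfolding disjoint_family_on_def
  proof (intro ballI impI)
    fix S S' assume S: "S \<in> PiE {..<n} T" and S': "S' \<in> PiE {..<n} T" and "S \<noteq> S'"
    have "S r = S' r" if "\<omega> \<in> A S" "\<omega> \<in> A S'" "r \<in> {..<n}" for \<omega> r
      using that by (auto simp: A_def)
    then show "A S \<inter> A S' = {}" using PiE_ext[OF S S'] \<open>S \<noteq> S'\<close> by blast
  qed
  have "prob (\<Union>S\<in>PiE {..<n} T. A S) = (\<Sum>S\<in>PiE {..<n} T. prob (A S))"
  proof (rule measure_finite_Union)
    show "finite (PiE {..<n} T)" using finT by (simp add: finite_PiE)
    show "A ` PiE {..<n} T \<subseteq> sets M"
    proof clarify
      fix S assume S: "S \<in> PiE {..<n} T"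
      show "A S \<in> sets M" unfolding A_def using T_sub[OF S] by (rule below_pattern_measurable)
    qed
  qed (use A_disjoint in \<open>simp_all add: emeasure_eq_measure\<close>)
  also have "\<dots> = (\<Sum>S\<in>PiE {..<n} T. \<Prod>r<n. x r ^ card (S r) * (1 - x r) ^ (m - card (S r)))"
  proof (rule sum.cong)
    fix S assume S: "S \<in> PiE {..<n} T"
    show "prob (A S) = (\<Prod>r<n. x r ^ card (S r) * (1 - x r) ^ (m - card (S r)))"
      unfolding A_def using assms(1,2) x T_sub[OF S] by (rule below_pattern_prob)
  qed simp
  also have "\<dots> = (\<Prod>r<n. \<Sum>U\<in>T r. x r ^ card U * (1 - x r) ^ (m - card U))"
    using finT by (intro prod_sum_PiE[symmetric]) auto
  also have "\<dots> = (\<Prod>r<n. \<Sum>i=k r..m. bern i m (x r))"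
    unfolding T_def using k by (intro prod.cong refl binomial_tail_as_subset_sum) auto
  finally show ?thesis unfolding event .
qed

lemma counts_event_measurable:
  "{\<omega>\<in>space M. \<forall>r<n. k r \<le> card {j\<in>{1..m}. XX r j \<omega> < x r}} \<in> sets M"
proof -
  have "{\<omega>\<in>space M. \<forall>r<n. k r \<le> card {j\<in>{1..m}. XX r j \<omega> < x r}}
      = {\<omega>\<in>space M. \<forall>r\<in>{..<n}. real (k r) \<le> real (card {j\<in>{1..m}. XX r j \<omega> < x r})}"
    by auto
  also have "\<dots> \<in> sets M"
  proof (intro sets.sets_Collect_finite_All ballI)
    fix r assume "r \<in> {..<n}"
    then have [measurable]: "(\<lambda>\<omega>. real (card {j\<in>{1..m}. XX r j \<omega> < x r})) \<in> borel_measurable M"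
      using sample_measurable by (intro measurable_count_below) auto
    show "{\<omega>\<in>space M. real (k r) \<le> real (card {j\<in>{1..m}. XX r j \<omega> < x r})} \<in> sets M"
      by measurable
  qed auto
  finally show ?thesis .
qed

end

definition cell_sample ::
  "'a measure \<Rightarrow> nat \<Rightarrow> nat \<Rightarrow> (nat \<Rightarrow> 'a \<Rightarrow> real) \<Rightarrow> (nat \<Rightarrow> nat \<Rightarrow> 'a \<Rightarrow> real) \<Rightarrow>
    nat \<Rightarrow> 'a \<Rightarrow> real"
  where
  "cell_sample M n m X XX r \<omega> = (\<Sum>k\<in>PiE {..<n} (\<lambda>_. {1..m}).
     indicator (cell_event M n m X k) \<omega> * order_stat m (\<lambda>j. XX r j \<omega>) (k r))"

locale bernstein_model = copula_vector M n C X + uniform_sample M n m XX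
  for M :: "'a measure" and n m :: nat and C X XX +
  assumes n_pos: "n \<ge> 1" and m_pos: "m \<ge> 1"
    and vector_sample_indep:
      "\<And>A B. A \<in> sets (PiM {..<n} (\<lambda>_. borel)) \<Longrightarrow>
        B \<in> sets (PiM ({..<n} \<times> {1..m}) (\<lambda>_. borel)) \<Longrightarrow>
        prob ({\<omega>\<in>space M. (\<lambda>r\<in>{..<n}. X r \<omega>) \<in> A} \<inter>
              {\<omega>\<in>space M. (\<lambda>p\<in>{..<n} \<times> {1..m}. XX (fst p) (snd p) \<omega>) \<in> B})
        = prob {\<omega>\<in>space M. (\<lambda>r\<in>{..<n}. X r \<omega>) \<in> A} *
          prob {\<omega>\<in>space M. (\<lambda>p\<in>{..<n} \<times> {1..m}. XX (fst p) (snd p) \<omega>) \<in> B}"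
begin

abbreviation counts_reach :: "(nat \<Rightarrow> real) \<Rightarrow> (nat \<Rightarrow> nat) \<Rightarrow> 'a set" where
  "counts_reach x k \<equiv> {\<omega>\<in>space M. \<forall>r<n. k r \<le> card {j\<in>{1..m}. XX r j \<omega> < x r}}"

lemma cell_counts_indep:
  "prob (cell m k \<inter> counts_reach x k) = prob (cell m k) * prob (counts_reach x k)"
proof -
  define J where "J = {..<n} \<times> {1..m}"
  define A where "A = PiE {..<n} (\<lambda>r. {(real (k r) - 1) / real m <..< real (k r) / real m})"
  define B where "B = {z \<in> space (PiM J (\<lambda>_. borel)).
                       \<forall>r\<in>{..<n}. real (k r) \<le> real (card {j\<in>{1..m}. z (r, j) < x r})}"
  have A: "A \<in> sets (PiM {..<n} (\<lambda>_. borel))" unfolding A_def by (rule sets_PiM_I_finite) auto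
  have B: "B \<in> sets (PiM J (\<lambda>_. borel))" unfolding B_def
  proof (intro sets.sets_Collect_finite_All ballI)
    fix r assume "r \<in> {..<n}"
    then have [measurable]:
      "(\<lambda>z. real (card {j\<in>{1..m}. z (r, j) < x r})) \<in> borel_measurable (PiM J (\<lambda>_. borel))"
      by (intro measurable_count_below measurable_component_singleton) (auto simp: J_def)
    show "{z \<in> space (PiM J (\<lambda>_. borel)). real (k r) \<le> real (card {j\<in>{1..m}. z (r, j) < x r})}
          \<in> sets (PiM J (\<lambda>_. borel))"
      by measurable
  qed auto
  have "{\<omega>\<in>space M. (\<lambda>r\<in>{..<n}. X r \<omega>) \<in> A} = cell m k"
    by (auto simp: A_def cell_event_def PiE_iff)
  moreover have "{\<omega>\<in>space M. (\<lambda>p\<in>J. XX (fst p) (snd p) \<omega>) \<in> B} = counts_reach x k"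
  proof -
    have "{j\<in>{1..m}. (\<lambda>p\<in>J. XX (fst p) (snd p) \<omega>) (r, j) < x r}
        = {j\<in>{1..m}. XX r j \<omega> < x r}" if "r < n" for r \<omega>
      using that by (auto simp: J_def)
    then show ?thesis by (auto simp: B_def space_PiM)
  qed
  ultimately show ?thesis using vector_sample_indep[OF A B[unfolded J_def]] by (simp add: J_def)
qed

lemma cell_sample_on_cell:
  assumes k: "k \<in> PiE {..<n} (\<lambda>_. {1..m})" and \<omega>: "\<omega> \<in> cell m k"
  shows "cell_sample M n m X XX r \<omega> = order_stat m (\<lambda>j. XX r j \<omega>) (k r)"
proof -
  have "cell_sample M n m X XX r \<omega>
      = (\<Sum>k'\<in>PiE {..<n} (\<lambda>_. {1..m}).
           if k' = k then order_stat m (\<lambda>j. XX r j \<omega>) (k r) else 0)"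
    unfolding cell_sample_def
  proof (rule sum.cong)
    fix k' assume k': "k' \<in> PiE {..<n} (\<lambda>_. {1..m})"
    show "indicator (cell m k') \<omega> * order_stat m (\<lambda>j. XX r j \<omega>) (k' r)
        = (if k' = k then order_stat m (\<lambda>j. XX r j \<omega>) (k r) else 0)"
      by (simp add: indicator_def cell_membership_iff[OF m_pos k \<omega> k'])
  qed simp
  also have "\<dots> = order_stat m (\<lambda>j. XX r j \<omega>) (k r)" using k by (simp add: finite_PiE)
  finally show ?thesis .
qed

lemma cell_sample_off_cells:
  assumes "\<omega> \<notin> (\<Union>k\<in>PiE {..<n} (\<lambda>_. {1..m}). cell m k)"
  shows "cell_sample M n m X XX r \<omega> = 0"
  using assms by (simp add: cell_sample_def)

lemma sampled_below_prob:
  assumes x: "x \<in> cube n"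
  shows "prob {\<omega>\<in>space M. \<forall>r<n. cell_sample M n m X XX r \<omega> < x r}
       = (\<Sum>k\<in>PiE {..<n} (\<lambda>_. {1..m}). prob (cell m k \<inter> counts_reach x k))"
proof -
  define K where "K = PiE {..<n} (\<lambda>_. {1..m::nat})"
  define G where "G = (\<Union>k\<in>K. cell m k)"
  have finK: "finite K" by (simp add: K_def finite_PiE)
  have on_cell: "(\<forall>r<n. cell_sample M n m X XX r \<omega> < x r) \<longleftrightarrow> \<omega> \<in> counts_reach x k"
    if k: "k \<in> K" and \<omega>: "\<omega> \<in> cell m k" for k \<omega>
  proof -
    have "cell_sample M n m X XX r \<omega> < x r \<longleftrightarrow> k r \<le> card {j\<in>{1..m}. XX r j \<omega> < x r}"
      if "r < n" for r
    proof -
      have "k r \<in> {1..m}" using PiE_mem[OF k[unfolded K_def]] that by simp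
      then show ?thesis
        unfolding cell_sample_on_cell[OF k[unfolded K_def] \<omega>] by (intro order_stat_less_iff) auto
    qed
    moreover have "\<omega> \<in> space M" using \<omega> by (simp add: cell_event_def)
    ultimately show ?thesis by simp
  qed
  have split: "{\<omega>\<in>space M. \<forall>r<n. cell_sample M n m X XX r \<omega> < x r}
      = (\<Union>k\<in>K. cell m k \<inter> counts_reach x k) \<union> {\<omega>\<in>space M - G. \<forall>r<n. 0 < x r}"
  proof (intro set_eqI)
    fix \<omega>
    show "\<omega> \<in> {\<omega>\<in>space M. \<forall>r<n. cell_sample M n m X XX r \<omega> < x r} \<longleftrightarrow>
          \<omega> \<in> (\<Union>k\<in>K. cell m k \<inter> counts_reach x k) \<union> {\<omega>\<in>space M - G. \<forall>r<n. 0 < x r}"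
    proof (cases "\<omega> \<in> G")
      case True
      then obtain k where k: "k \<in> K" "\<omega> \<in> cell m k" by (auto simp: G_def)
      then have "\<omega> \<in> space M" by (simp add: cell_event_def)
      moreover have "\<omega> \<in> (\<Union>k'\<in>K. cell m k' \<inter> counts_reach x k') \<longleftrightarrow> \<omega> \<in> counts_reach x k"
        using k by (auto simp: K_def cell_membership_iff[OF m_pos k(1)[unfolded K_def] k(2)])
      ultimately show ?thesis using on_cell[OF k] True by auto
    next
      case False
      then have "cell_sample M n m X XX r \<omega> = 0" for r
        by (intro cell_sample_off_cells) (simp add: G_def K_def)
      moreover have "\<omega> \<notin> (\<Union>k\<in>K. cell m k \<inter> counts_reach x k)"
        using False by (auto simp: G_def)
      ultimately show ?thesis using False by auto
    qed
  qed
  have "G \<in> sets M" unfolding G_def by (intro sets.finite_UN finK cell_measurable)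
  then have "{\<omega>\<in>space M - G. \<forall>r<n. 0 < x r} \<in> sets M" by (cases "\<forall>r<n. 0 < x r") auto
  with outside_cells_null[OF m_pos] have "{\<omega>\<in>space M - G. \<forall>r<n. 0 < x r} \<in> null_sets M"
    by (rule null_sets_subset) (unfold G_def K_def, blast)
  then have "prob {\<omega>\<in>space M. \<forall>r<n. cell_sample M n m X XX r \<omega> < x r}
      = prob (\<Union>k\<in>K. cell m k \<inter> counts_reach x k)"
    unfolding split
    by (intro measure_Un_null_set sets.finite_UN finK sets.Int cell_measurable
        counts_event_measurable)
  also have "\<dots> = (\<Sum>k\<in>K. prob (cell m k \<inter> counts_reach x k))"
  proof (rule measure_finite_Union[OF finK])
    show "disjoint_family_on (\<lambda>k. cell m k \<inter> counts_reach x k) K"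
      using cells_disjoint[OF m_pos] unfolding K_def disjoint_family_on_def by blast
    show "(\<lambda>k. cell m k \<inter> counts_reach x k) ` K \<subseteq> sets M"
      using cell_measurable counts_event_measurable by blast
  qed (simp add: emeasure_eq_measure)
  finally show ?thesis by (simp add: K_def)
qed

theorem bernstein_copula_as_sampled_cdf:
  assumes x: "x \<in> cube n"
  shows "bernstein_copula n m C x = prob {\<omega>\<in>space M. \<forall>r<n. cell_sample M n m X XX r \<omega> < x r}"
proof -
  define K where "K = PiE {..<n} (\<lambda>_. {1..m})"
  have xr: "x r \<in> {0..1}" if "r < n" for r
    using PiE_mem[OF x[unfolded cube_def]] that by simp
  have grounded: "C (\<lambda>r\<in>{..<n}. real (i r) / real m) = 0"
    if i: "i \<in> PiE {..<n} (\<lambda>_. {0..m})" and "\<exists>r<n. i r = 0" for i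
  proof -
    obtain r where "r < n" "(\<lambda>r\<in>{..<n}. real (i r) / real m) r = 0"
      using \<open>\<exists>r<n. i r = 0\<close> by auto
    then show ?thesis using copula grid_point_in_cube[OF i] unfolding is_copula_def by blast
  qed
  have "K \<subseteq> PiE {..<n} (\<lambda>_. {0..m})" unfolding K_def by (rule PiE_mono) auto
  then have "bernstein_copula n m C x
      = (\<Sum>k\<in>K. prob (cell m k) * (\<Prod>r<n. \<Sum>i=k r..m. bern i m (x r)))"
    unfolding K_def using grounded copula_at_grid_point[OF m_pos]
    by (intro bernstein_copula_cell_expansion) auto
  also have "\<dots> = (\<Sum>k\<in>K. prob (cell m k) * prob (counts_reach x k))"
  proof (rule sum.cong)
    fix k assume k: "k \<in> K"
    have "k r \<le> m" if "r < n" for r using PiE_mem[OF k[unfolded K_def]] that by simp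
    then show "prob (cell m k) * (\<Prod>r<n. \<Sum>i=k r..m. bern i m (x r))
        = prob (cell m k) * prob (counts_reach x k)"
      using counts_at_least_prob[OF n_pos m_pos xr] by simp
  qed simp
  also have "\<dots> = (\<Sum>k\<in>K. prob (cell m k \<inter> counts_reach x k))"
    by (simp only: cell_counts_indep)
  also have "\<dots> = prob {\<omega>\<in>space M. \<forall>r<n. cell_sample M n m X XX r \<omega> < x r}"
    by (simp add: sampled_below_prob[OF x] K_def)
  finally show ?thesis .
qed

end

theorem mainTheorem9:
  fixes n m :: nat
    and C :: "(nat \<Rightarrow> real) \<Rightarrow> real"
    and M :: "'a measure"
    and X :: "nat \<Rightarrow> 'a \<Rightarrow> real"
    and XX :: "nat \<Rightarrow> nat \<Rightarrow> 'a \<Rightarrow> real"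
  defines "J \<equiv> {..<n} \<times> {1..m}"
  defines "E \<equiv> (\<lambda>k. {\<omega>\<in>space M. \<forall>r<n.
              (real (k r) - 1) / real m < X r \<omega> \<and> X r \<omega> < real (k r) / real m})"
  defines "Y \<equiv> (\<lambda>r \<omega>. \<Sum>k\<in>PiE {..<n} (\<lambda>_. {1..m}).
              indicator (E k) \<omega> * order_stat m (\<lambda>j. XX r j \<omega>) (k r))"
  assumes "n \<ge> 2" and "m \<ge> 1"
    and "is_copula n C"
    and "prob_space M"
    and "\<And>r. r < n \<Longrightarrow> X r \<in> borel_measurable M"
    and "\<And>x. x \<in> cube n \<Longrightarrow> C x = measure M {\<omega>\<in>space M. \<forall>r<n. X r \<omega> \<le> x r}"
    and "\<And>r j. (r, j) \<in> J \<Longrightarrow> XX r j \<in> borel_measurable M"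
    and "\<And>r j. (r, j) \<in> J \<Longrightarrow> distr M lborel (XX r j) = uniform_measure lborel {0..1}"
    and "prob_space.indep_vars M (\<lambda>_. borel) (\<lambda>p. XX (fst p) (snd p)) J"
    and "\<And>A B. A \<in> sets (PiM {..<n} (\<lambda>_. borel)) \<Longrightarrow> B \<in> sets (PiM J (\<lambda>_. borel)) \<Longrightarrow>
          measure M ({\<omega>\<in>space M. (\<lambda>r\<in>{..<n}. X r \<omega>) \<in> A} \<inter>
                     {\<omega>\<in>space M. (\<lambda>p\<in>J. XX (fst p) (snd p) \<omega>) \<in> B})
          = measure M {\<omega>\<in>space M. (\<lambda>r\<in>{..<n}. X r \<omega>) \<in> A} *
            measure M {\<omega>\<in>space M. (\<lambda>p\<in>J. XX (fst p) (snd p) \<omega>) \<in> B}"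
  shows "\<forall>x\<in>cube n. bernstein_copula n m C x = measure M {\<omega>\<in>space M. \<forall>r<n. Y r \<omega> < x r}"
proof -
  have "bernstein_model M n m C X XX"
    using assms(4-) unfolding J_def bernstein_model_def bernstein_model_axioms_def
      copula_vector_def copula_vector_axioms_def uniform_sample_def uniform_sample_axioms_def
    by simp
  then interpret bernstein_model M n m C X XX .
  have "E = cell_event M n m X" unfolding E_def cell_event_def ..
  then have "Y = cell_sample M n m X XX" unfolding Y_def cell_sample_def by (intro ext) simp
  then show ?thesis using bernstein_copula_as_sampled_cdf by simp
qed

end
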